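(* Let $\Gamma$ be a $W$-generic metric graph, with $W:\Gamma\to\mathbb{R}$ of class $C^1$, and let $f_k$, $\lambda_k$ be the eigenfunctions and eigenvalues of $H_W=-\frac{\partial^2}{\partial x^2}+W$ with Dirichlet boundary and Neumann–Kirchhoff vertex conditions. Let $k_1<\dots<k_M$ and nonzero reals $a_1,\dots,a_M$ be given, and define $g(x,y)=\sum_{i=1}^{M}a_ie^{-\lambda_{k_i}y}f_{k_i}(x)$ for $x\in\Gamma$, $y\in\mathbb{R}$, and $F_y(x):=g(x,y)$. Then for every $y\in\mathbb{R}$, $F_y$ is not identically zero on any open subset of $\Gamma$.
   Context: A metric graph is connected with finitely many edges of finite length, each identified with an interval. $H_W$ acts edgewise on $\bigoplus_e H^2(e)$ with Dirichlet conditions at degree-one vertices and, at inner vertices (degree $\ge2$), continuity and vanishing sum of the outgoing derivatives. Eigenvalues $\lambda_1\le\lambda_2\le\dots$ are counted with multiplicity, with $L^2$-orthogonal eigenfunctions $f_k$. $\Gamma$ is $W$-generic if no eigenfunction of $H_W$ vanishes at an inner vertex (so all eigenvalues are simple). *)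

theory Defs
  imports "HOL-Analysis.Analysis"
begin

text \<open>A metric graph: a finite nonempty set E of edges; edge e is identified with
  the interval [0, len e], the point 0 being the vertex src e and the point len e the
  vertex tgt e. Loops and multiple edges are allowed.\<close>

definition graph_vertices :: "'e set \<Rightarrow> ('e \<Rightarrow> 'v) \<Rightarrow> ('e \<Rightarrow> 'v) \<Rightarrow> 'v set" where
  "graph_vertices E src tgt = src ` E \<union> tgt ` E"

definition vdegree :: "'e set \<Rightarrow> ('e \<Rightarrow> 'v) \<Rightarrow> ('e \<Rightarrow> 'v) \<Rightarrow> 'v \<Rightarrow> nat" where
  "vdegree E src tgt v = card {e\<in>E. src e = v} + card {e\<in>E. tgt e = v}"

definition metric_graph :: "'e set \<Rightarrow> ('e \<Rightarrow> 'v) \<Rightarrow> ('e \<Rightarrow> 'v) \<Rightarrow> ('e \<Rightarrow> real) \<Rightarrow> bool" where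
  "metric_graph E src tgt len \<longleftrightarrow>
     finite E \<and> E \<noteq> {} \<and> (\<forall>e\<in>E. 0 < len e) \<and>
     (\<forall>u\<in>graph_vertices E src tgt. \<forall>v\<in>graph_vertices E src tgt.
        (\<lambda>a b. \<exists>e\<in>E. (src e = a \<and> tgt e = b) \<or> (src e = b \<and> tgt e = a))\<^sup>*\<^sup>* u v)"

text \<open>Points of the graph: pairs (e, x) with x in [0, len e]; two such pairs denote the
  same point of the graph iff they are equal or both are ends at the same vertex.\<close>

definition graph_points :: "'e set \<Rightarrow> ('e \<Rightarrow> real) \<Rightarrow> ('e \<times> real) set" where
  "graph_points E len = {(e, x). e \<in> E \<and> x \<in> {0..len e}}"

definition same_point :: "('e \<Rightarrow> 'v) \<Rightarrow> ('e \<Rightarrow> 'v) \<Rightarrow> ('e \<Rightarrow> real) \<Rightarrow> 'e \<times> real \<Rightarrow> 'e \<times> real \<Rightarrow> bool" where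
  "same_point src tgt len p q \<longleftrightarrow>
     p = q \<or>
     (snd p = 0 \<and> snd q = 0 \<and> src (fst p) = src (fst q)) \<or>
     (snd p = 0 \<and> snd q = len (fst q) \<and> src (fst p) = tgt (fst q)) \<or>
     (snd p = len (fst p) \<and> snd q = 0 \<and> tgt (fst p) = src (fst q)) \<or>
     (snd p = len (fst p) \<and> snd q = len (fst q) \<and> tgt (fst p) = tgt (fst q))"

text \<open>Open subsets of the metric graph (quotient topology of the disjoint union of the
  closed edge intervals), represented as saturated sets of parameter pairs.\<close>

definition graph_open :: "'e set \<Rightarrow> ('e \<Rightarrow> 'v) \<Rightarrow> ('e \<Rightarrow> 'v) \<Rightarrow> ('e \<Rightarrow> real) \<Rightarrow> ('e \<times> real) set \<Rightarrow> bool" where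
  "graph_open E src tgt len U \<longleftrightarrow>
     U \<subseteq> graph_points E len \<and>
     (\<forall>p\<in>U. \<forall>q\<in>graph_points E len. same_point src tgt len p q \<longrightarrow> q \<in> U) \<and>
     (\<forall>e\<in>E. openin (top_of_set {0..len e}) {x\<in>{0..len e}. (e, x) \<in> U})"

definition graph_C1 :: "'e set \<Rightarrow> ('e \<Rightarrow> 'v) \<Rightarrow> ('e \<Rightarrow> 'v) \<Rightarrow> ('e \<Rightarrow> real) \<Rightarrow> ('e \<Rightarrow> real \<Rightarrow> real) \<Rightarrow> bool" where
  "graph_C1 E src tgt len W \<longleftrightarrow>
     (\<forall>e\<in>E. \<exists>D. continuous_on {0..len e} D \<and>
        (\<forall>x\<in>{0..len e}. (W e has_real_derivative D x) (at x within {0..len e}))) \<and>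
     (\<forall>p\<in>graph_points E len. \<forall>q\<in>graph_points E len.
        same_point src tgt len p q \<longrightarrow> W (fst p) (snd p) = W (fst q) (snd q))"

text \<open>Eigenfunctions of H_W = -d^2/dx^2 + W with Dirichlet conditions at degree-one
  vertices and Neumann-Kirchhoff conditions (continuity, vanishing sum of outgoing
  derivatives) at inner vertices. The outgoing derivative of edge e at src e is
  phi_e'(0), at tgt e it is -phi_e'(len e).\<close>

definition is_eigenfunction ::
  "'e set \<Rightarrow> ('e \<Rightarrow> 'v) \<Rightarrow> ('e \<Rightarrow> 'v) \<Rightarrow> ('e \<Rightarrow> real) \<Rightarrow> ('e \<Rightarrow> real \<Rightarrow> real) \<Rightarrow>
   ('e \<Rightarrow> real \<Rightarrow> real) \<Rightarrow> real \<Rightarrow> bool" where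
  "is_eigenfunction E src tgt len W \<phi> \<mu> \<longleftrightarrow>
     (\<exists>e\<in>E. \<exists>x\<in>{0..len e}. \<phi> e x \<noteq> 0) \<and>
     (\<exists>d d2.
        (\<forall>e\<in>E. \<forall>x\<in>{0..len e}.
           (\<phi> e has_real_derivative d e x) (at x within {0..len e}) \<and>
           (d e has_real_derivative d2 e x) (at x within {0..len e}) \<and>
           - d2 e x + W e x * \<phi> e x = \<mu> * \<phi> e x) \<and>
        (\<forall>v\<in>graph_vertices E src tgt. vdegree E src tgt v = 1 \<longrightarrow>
           (\<forall>e\<in>E. (src e = v \<longrightarrow> \<phi> e 0 = 0) \<and> (tgt e = v \<longrightarrow> \<phi> e (len e) = 0))) \<and>
        (\<forall>v\<in>graph_vertices E src tgt. 2 \<le> vdegree E src tgt v \<longrightarrow>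
           (\<exists>c. \<forall>e\<in>E. (src e = v \<longrightarrow> \<phi> e 0 = c) \<and> (tgt e = v \<longrightarrow> \<phi> e (len e) = c)) \<and>
           (\<Sum>e\<in>{e\<in>E. src e = v}. d e 0) + (\<Sum>e\<in>{e\<in>E. tgt e = v}. - d e (len e)) = 0))"

definition l2_inner :: "'e set \<Rightarrow> ('e \<Rightarrow> real) \<Rightarrow> ('e \<Rightarrow> real \<Rightarrow> real) \<Rightarrow> ('e \<Rightarrow> real \<Rightarrow> real) \<Rightarrow> real" where
  "l2_inner E len \<phi> \<psi> = (\<Sum>e\<in>E. integral {0..len e} (\<lambda>x. \<phi> e x * \<psi> e x))"

definition eigen_system ::
  "'e set \<Rightarrow> ('e \<Rightarrow> 'v) \<Rightarrow> ('e \<Rightarrow> 'v) \<Rightarrow> ('e \<Rightarrow> real) \<Rightarrow> ('e \<Rightarrow> real \<Rightarrow> real) \<Rightarrow>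
   (nat \<Rightarrow> real) \<Rightarrow> (nat \<Rightarrow> 'e \<Rightarrow> real \<Rightarrow> real) \<Rightarrow> bool" where
  "eigen_system E src tgt len W lam f \<longleftrightarrow>
     mono lam \<and>
     (\<forall>k. is_eigenfunction E src tgt len W (f k) (lam k)) \<and>
     (\<forall>j k. j \<noteq> k \<longrightarrow> l2_inner E len (f j) (f k) = 0) \<and>
     (\<forall>\<phi> \<mu>. is_eigenfunction E src tgt len W \<phi> \<mu> \<longrightarrow>
        finite {k. lam k = \<mu>} \<and>
        (\<exists>c. \<forall>e\<in>E. \<forall>x\<in>{0..len e}. \<phi> e x = (\<Sum>k\<in>{k. lam k = \<mu>}. c k * f k e x)))"

definition W_generic :: "'e set \<Rightarrow> ('e \<Rightarrow> 'v) \<Rightarrow> ('e \<Rightarrow> 'v) \<Rightarrow> ('e \<Rightarrow> real) \<Rightarrow> ('e \<Rightarrow> real \<Rightarrow> real) \<Rightarrow> bool" where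
  "W_generic E src tgt len W \<longleftrightarrow>
     (\<forall>\<phi> \<mu>. is_eigenfunction E src tgt len W \<phi> \<mu> \<longrightarrow>
        (\<forall>v\<in>graph_vertices E src tgt. 2 \<le> vdegree E src tgt v \<longrightarrow>
           \<not> (\<exists>e\<in>E. (src e = v \<and> \<phi> e 0 = 0) \<or> (tgt e = v \<and> \<phi> e (len e) = 0))))"

end

theory Submission
  imports Defs
begin

(* Suppose the combination vanishes on an open set of the graph; then it vanishes on an open
   interval I inside some edge e0. Grouping the terms by eigenvalue writes it as a sum of
   solutions G_mu of -G'' + W G = mu G with distinct mu. Differentiating twice on I shows
   that the sum weighted by mu vanishes there as well, so by induction on the number of
   eigenvalues every G_mu vanishes on I. Uniqueness for the linear ODE (an energy estimate of
   Gronwall type) makes G_mu vanish on all of e0, in particular at both ends of e0. A nonzero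
   G_mu would be an eigenfunction, which by W-genericity cannot vanish at an inner vertex;
   so both ends of e0 are leaves, and by connectedness the graph is the single edge e0,
   where G_mu = 0 anyway. Hence every G_mu is zero, and orthogonality of the f_k forces all
   coefficients a_i exp (-lambda_(k_i) y) to vanish, contradicting a_i <> 0. *)

section \<open>Linear second-order equations on an interval\<close>

lemma DERIV_zero_if_vanishing_on_open:
  fixes g :: "real \<Rightarrow> real"
  assumes "open I" "x \<in> I" "\<And>z. z \<in> I \<Longrightarrow> g z = 0" "(g has_real_derivative D) (at x)"
  shows "D = 0"
proof -
  have "(g has_real_derivative 0) (at x)"
    by (rule has_field_derivative_transform_within_open[of "\<lambda>_. 0" 0 x I])
       (use assms in auto)
  then show ?thesis
    using assms(4) DERIV_unique by blast
qed

lemma self_bounded_derivative_zero_right: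
  fixes En En' :: "real \<Rightarrow> real"
  assumes "x0 \<le> x" "continuous_on {x0..x} En" "0 \<le> En x" "En x0 = 0"
    and deriv: "\<And>z. x0 < z \<Longrightarrow> z < x \<Longrightarrow> (En has_real_derivative En' z) (at z) \<and> En' z \<le> C * En z"
  shows "En x = 0"
proof -
  have "En x * exp (- C * x) \<le> En x0 * exp (- C * x0)"
  proof (rule DERIV_nonpos_imp_decreasing_open[OF \<open>x0 \<le> x\<close>])
    show "continuous_on {x0..x} (\<lambda>z. En z * exp (- C * z))"
      using assms(2) by (intro continuous_intros)
    fix z assume "x0 < z" "z < x"
    with deriv have En': "(En has_real_derivative En' z) (at z)" "En' z \<le> C * En z"
      by blast+
    have "((\<lambda>z. En z * exp (- C * z)) has_real_derivative (En' z - C * En z) * exp (- C * z)) (at z)"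
      using En'(1) by (auto intro!: derivative_eq_intros simp: algebra_simps)
    moreover have "(En' z - C * En z) * exp (- C * z) \<le> 0"
      using En'(2) by (simp add: mult_nonpos_nonneg)
    ultimately show "\<exists>D. ((\<lambda>z. En z * exp (- C * z)) has_real_derivative D) (at z) \<and> D \<le> 0"
      by blast
  qed
  with assms(3,4) show ?thesis
    by (simp add: mult_le_0_iff)
qed

lemma self_bounded_derivative_zero_left:
  fixes En En' :: "real \<Rightarrow> real"
  assumes "x \<le> x0" "continuous_on {x..x0} En" "0 \<le> En x" "En x0 = 0"
    and deriv: "\<And>z. x < z \<Longrightarrow> z < x0 \<Longrightarrow> (En has_real_derivative En' z) (at z) \<and> - C * En z \<le> En' z"
  shows "En x = 0"
proof -
  have "En x * exp (C * x) \<le> En x0 * exp (C * x0)"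
  proof (rule DERIV_nonneg_imp_increasing_open[OF \<open>x \<le> x0\<close>])
    show "continuous_on {x..x0} (\<lambda>z. En z * exp (C * z))"
      using assms(2) by (intro continuous_intros)
    fix z assume "x < z" "z < x0"
    with deriv have En': "(En has_real_derivative En' z) (at z)" "- C * En z \<le> En' z"
      by blast+
    have "((\<lambda>z. En z * exp (C * z)) has_real_derivative (En' z + C * En z) * exp (C * z)) (at z)"
      using En'(1) by (auto intro!: derivative_eq_intros simp: algebra_simps)
    moreover have "(En' z + C * En z) * exp (C * z) \<ge> 0"
      using En'(2) by simp
    ultimately show "\<exists>D. ((\<lambda>z. En z * exp (C * z)) has_real_derivative D) (at z) \<and> D \<ge> 0"
      by blast
  qed
  with assms(3,4) show ?thesis
    by (simp add: mult_le_0_iff)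
qed

lemma self_bounded_derivative_imp_zero:
  fixes En En' :: "real \<Rightarrow> real"
  assumes cont: "continuous_on {a..b} En" and nonneg: "\<forall>x\<in>{a..b}. 0 \<le> En x"
    and deriv: "\<forall>x\<in>{a<..<b}. (En has_real_derivative En' x) (at x) \<and> \<bar>En' x\<bar> \<le> C * En x"
    and x0: "x0 \<in> {a..b}" "En x0 = 0"
  shows "\<forall>x\<in>{a..b}. En x = 0"
proof
  fix x assume x: "x \<in> {a..b}"
  have deriv': "(En has_real_derivative En' z) (at z) \<and> \<bar>En' z\<bar> \<le> C * En z"
    if "min x x0 < z" "z < max x x0" for z
  proof -
    have "z \<in> {a<..<b}"
      using x x0 that by auto
    with deriv show ?thesis
      by blast
  qed
  show "En x = 0"
  proof (cases "x0 \<le> x")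
    case True
    show ?thesis
    proof (rule self_bounded_derivative_zero_right[where En = En, OF True _ _ x0(2)])
      show "continuous_on {x0..x} En" "0 \<le> En x"
        using cont nonneg x x0 by (auto intro: continuous_on_subset)
      fix z assume "x0 < z" "z < x"
      with True deriv'[of z] show "(En has_real_derivative En' z) (at z) \<and> En' z \<le> C * En z"
        by (auto simp: abs_le_iff)
    qed
  next
    case False
    show ?thesis
    proof (rule self_bounded_derivative_zero_left[where En = En, OF _ _ _ x0(2)])
      show "x \<le> x0" "continuous_on {x..x0} En" "0 \<le> En x"
        using False cont nonneg x x0 by (auto intro: continuous_on_subset)
      fix z assume "x < z" "z < x0"
      with False deriv'[of z] show "(En has_real_derivative En' z) (at z) \<and> - C * En z \<le> En' z"
        by (auto simp: abs_le_iff)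
    qed
  qed
qed

lemma linear_ode2_zero_initial_imp_zero:
  fixes g d d2 q :: "real \<Rightarrow> real"
  assumes q: "continuous_on {a..b} q"
    and ode: "\<forall>x\<in>{a..b}. (g has_real_derivative d x) (at x within {a..b}) \<and>
        (d has_real_derivative d2 x) (at x within {a..b}) \<and> d2 x = q x * g x"
    and x0: "x0 \<in> {a..b}" "g x0 = 0" "d x0 = 0"
  shows "\<forall>x\<in>{a..b}. g x = 0"
proof -
  obtain B where B: "\<forall>x\<in>{a..b}. \<bar>q x\<bar> \<le> B"
    using compact_imp_bounded[OF compact_continuous_image[OF q compact_Icc]]
    by (auto simp: bounded_iff)
  define En where "En x = g x * g x + d x * d x" for x
  have "continuous_on {a..b} g" "continuous_on {a..b} d"
    using ode by (auto intro!: DERIV_continuous_on)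
  then have En_cont: "continuous_on {a..b} En"
    unfolding En_def by (intro continuous_intros)
  have En_deriv: "\<forall>x\<in>{a<..<b}. (En has_real_derivative 2 * g x * d x * (1 + q x)) (at x) \<and>
      \<bar>2 * g x * d x * (1 + q x)\<bar> \<le> (1 + B) * En x"
  proof
    fix x assume x: "x \<in> {a<..<b}"
    then have "x \<in> {a..b}" "at x within {a..b} = at x"
      by (auto intro: at_within_interior)
    with ode[rule_format, OF this(1)]
    have g: "(g has_real_derivative d x) (at x)" "(d has_real_derivative d2 x) (at x)"
      and d2: "d2 x = q x * g x" by auto
    have "(En has_real_derivative 2 * g x * d x * (1 + q x)) (at x)"
      using DERIV_add[OF DERIV_mult[OF g(1) g(1)] DERIV_mult[OF g(2) g(2)]] d2
      unfolding En_def[abs_def] by (simp add: algebra_simps)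
    moreover have "\<bar>2 * g x * d x * (1 + q x)\<bar> \<le> (1 + B) * En x"
    proof -
      have "\<bar>2 * g x * d x\<bar> \<le> En x"
        using sum_squares_bound[of "\<bar>g x\<bar>" "\<bar>d x\<bar>"]
        by (simp add: En_def abs_mult power2_eq_square)
      moreover have "\<bar>1 + q x\<bar> \<le> 1 + B"
        using B \<open>x \<in> {a..b}\<close> by (force simp: abs_le_iff)
      ultimately have "\<bar>2 * g x * d x\<bar> * \<bar>1 + q x\<bar> \<le> En x * (1 + B)"
        by (intro mult_mono) auto
      then show ?thesis
        by (simp add: abs_mult mult.commute)
    qed
    ultimately show "(En has_real_derivative 2 * g x * d x * (1 + q x)) (at x) \<and>
        \<bar>2 * g x * d x * (1 + q x)\<bar> \<le> (1 + B) * En x" ..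
  qed
  have "\<forall>x\<in>{a..b}. En x = 0"
    by (rule self_bounded_derivative_imp_zero[OF En_cont _ En_deriv x0(1)])
       (use x0 in \<open>auto simp: En_def\<close>)
  then show ?thesis
    by (simp add: En_def)
qed

lemma eigensolution_sum_zero_imp_weighted_sum_zero:
  fixes g d d2 :: "'s \<Rightarrow> real \<Rightarrow> real" and w :: "real \<Rightarrow> real" and \<mu> :: "'s \<Rightarrow> real"
  assumes "open I"
    and g': "\<And>s x. s \<in> S \<Longrightarrow> x \<in> I \<Longrightarrow> (g s has_real_derivative d s x) (at x)"
    and d': "\<And>s x. s \<in> S \<Longrightarrow> x \<in> I \<Longrightarrow> (d s has_real_derivative d2 s x) (at x)"
    and ode: "\<And>s x. s \<in> S \<Longrightarrow> x \<in> I \<Longrightarrow> d2 s x = (w x - \<mu> s) * g s x"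
    and zero: "\<And>x. x \<in> I \<Longrightarrow> (\<Sum>s\<in>S. g s x) = 0"
    and "x \<in> I"
  shows "(\<Sum>s\<in>S. \<mu> s * g s x) = 0"
proof -
  have "(\<Sum>s\<in>S. d s z) = 0" if "z \<in> I" for z
    by (rule DERIV_zero_if_vanishing_on_open[OF \<open>open I\<close> that zero DERIV_sum]) (use g' that in auto)
  then have "(\<Sum>s\<in>S. d2 s x) = 0"
    by (rule DERIV_zero_if_vanishing_on_open[OF \<open>open I\<close> \<open>x \<in> I\<close> _ DERIV_sum])
       (use d' \<open>x \<in> I\<close> in auto)
  moreover have "(\<Sum>s\<in>S. d2 s x) = (\<Sum>s\<in>S. w x * g s x - \<mu> s * g s x)"
    using ode \<open>x \<in> I\<close> by (intro sum.cong) (auto simp: algebra_simps)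
  ultimately show ?thesis
    using zero[OF \<open>x \<in> I\<close>] by (simp add: sum_subtractf flip: sum_distrib_left)
qed

lemma eigensolution_sum_zero_imp_zero:
  fixes g d d2 :: "'s \<Rightarrow> real \<Rightarrow> real" and w :: "real \<Rightarrow> real" and \<mu> :: "'s \<Rightarrow> real"
  assumes "finite S" "inj_on \<mu> S" "open I"
    and "\<And>s x. s \<in> S \<Longrightarrow> x \<in> I \<Longrightarrow> (g s has_real_derivative d s x) (at x)"
    and "\<And>s x. s \<in> S \<Longrightarrow> x \<in> I \<Longrightarrow> (d s has_real_derivative d2 s x) (at x)"
    and "\<And>s x. s \<in> S \<Longrightarrow> x \<in> I \<Longrightarrow> d2 s x = (w x - \<mu> s) * g s x"
    and "\<And>x. x \<in> I \<Longrightarrow> (\<Sum>s\<in>S. g s x) = 0"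
    and "s \<in> S" "x \<in> I"
  shows "g s x = 0"
  using assms(1,2,4-9)
proof (induction S arbitrary: g d d2 s x rule: finite_induct)
  case empty
  then show ?case by simp
next
  case (insert t S)
  \<comment> \<open>The combination \<open>\<Sum> (\<mu> s - \<mu> t) g s\<close> eliminates \<open>g t\<close> and is again a vanishing sum.\<close>
  define c where "c s = \<mu> s - \<mu> t" for s
  have weighted: "(\<Sum>s\<in>insert t S. \<mu> s * g s z) = 0" if "z \<in> I" for z
    by (rule eigensolution_sum_zero_imp_weighted_sum_zero[OF \<open>open I\<close> insert.prems(2-5) that])
  have rest: "g s' z = 0" if "s' \<in> S" "z \<in> I" for s' z
  proof -
    have "c s' * g s' z = 0"
    proof (rule insert.IH[of "\<lambda>s x. c s * g s x" "\<lambda>s x. c s * d s x" "\<lambda>s x. c s * d2 s x"])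
      show "inj_on \<mu> S"
        using insert.prems(1) by auto
      show "((\<lambda>x. c s * g s x) has_real_derivative c s * d s x) (at x)"
        and "((\<lambda>x. c s * d s x) has_real_derivative c s * d2 s x) (at x)"
        and "c s * d2 s x = (w x - \<mu> s) * (c s * g s x)"
        if "s \<in> S" "x \<in> I" for s x
        using insert.prems(2-4) that by (auto intro: DERIV_cmult)
      have "(\<Sum>s\<in>S. c s * g s x) =
          (\<Sum>s\<in>insert t S. \<mu> s * g s x) - \<mu> t * (\<Sum>s\<in>insert t S. g s x)" for x
        using insert.hyps by (simp add: c_def algebra_simps sum_subtractf sum_distrib_left)
      then show "(\<Sum>s\<in>S. c s * g s x) = 0" if "x \<in> I" for x
        using weighted insert.prems(5) that by simp
    qed (use that in auto)
    moreover have "c s' \<noteq> 0"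
      using inj_onD[OF insert.prems(1), of s' t] insert.hyps(2) that by (auto simp: c_def)
    ultimately show ?thesis
      by simp
  qed
  show ?case
  proof (cases "s = t")
    case True
    with insert.prems(5)[OF \<open>x \<in> I\<close>] rest[OF _ \<open>x \<in> I\<close>] insert.hyps show ?thesis
      by simp
  next
    case False
    with insert.prems(6) rest[OF _ \<open>x \<in> I\<close>] show ?thesis
      by simp
  qed
qed

lemma openin_Icc_contains_interval:
  fixes a b :: real
  assumes "a < b" "openin (top_of_set {a..b}) V" "x0 \<in> V"
  shows "\<exists>p q. a \<le> p \<and> p < q \<and> q \<le> b \<and> {p<..<q} \<subseteq> V"
proof -
  obtain \<epsilon> where "\<epsilon> > 0" and ball: "\<forall>x\<in>{a..b}. dist x x0 < \<epsilon> \<longrightarrow> x \<in> V"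
    using assms(2,3) unfolding openin_euclidean_subtopology_iff by blast
  have "x0 \<in> {a..b}"
    using assms(2,3) openin_subset by fastforce
  define p where "p = max a (x0 - \<epsilon> / 2)"
  define q where "q = min b (x0 + \<epsilon> / 2)"
  have "a \<le> p" "p < q" "q \<le> b"
    using \<open>a < b\<close> \<open>x0 \<in> {a..b}\<close> \<open>\<epsilon> > 0\<close> by (auto simp: p_def q_def)
  moreover have "{p<..<q} \<subseteq> V"
    using ball \<open>\<epsilon> > 0\<close> by (auto simp: p_def q_def dist_real_def)
  ultimately show ?thesis
    by blast
qed

section \<open>The eigenvalue equations on a metric graph\<close>

definition eigen_equations ::
  "'e set \<Rightarrow> ('e \<Rightarrow> 'v) \<Rightarrow> ('e \<Rightarrow> 'v) \<Rightarrow> ('e \<Rightarrow> real) \<Rightarrow> ('e \<Rightarrow> real \<Rightarrow> real) \<Rightarrow>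
   ('e \<Rightarrow> real \<Rightarrow> real) \<Rightarrow> real \<Rightarrow> ('e \<Rightarrow> real \<Rightarrow> real) \<Rightarrow> ('e \<Rightarrow> real \<Rightarrow> real) \<Rightarrow> bool" where
  "eigen_equations E src tgt len W \<phi> \<mu> d d2 \<longleftrightarrow>
     (\<forall>e\<in>E. \<forall>x\<in>{0..len e}.
        (\<phi> e has_real_derivative d e x) (at x within {0..len e}) \<and>
        (d e has_real_derivative d2 e x) (at x within {0..len e}) \<and>
        - d2 e x + W e x * \<phi> e x = \<mu> * \<phi> e x) \<and>
     (\<forall>v\<in>graph_vertices E src tgt. vdegree E src tgt v = 1 \<longrightarrow>
        (\<forall>e\<in>E. (src e = v \<longrightarrow> \<phi> e 0 = 0) \<and> (tgt e = v \<longrightarrow> \<phi> e (len e) = 0))) \<and>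
     (\<forall>v\<in>graph_vertices E src tgt. 2 \<le> vdegree E src tgt v \<longrightarrow>
        (\<exists>c. \<forall>e\<in>E. (src e = v \<longrightarrow> \<phi> e 0 = c) \<and> (tgt e = v \<longrightarrow> \<phi> e (len e) = c)) \<and>
        (\<Sum>e\<in>{e\<in>E. src e = v}. d e 0) + (\<Sum>e\<in>{e\<in>E. tgt e = v}. - d e (len e)) = 0)"

lemma is_eigenfunction_iff:
  "is_eigenfunction E src tgt len W \<phi> \<mu> \<longleftrightarrow>
     (\<exists>e\<in>E. \<exists>x\<in>{0..len e}. \<phi> e x \<noteq> 0) \<and> (\<exists>d d2. eigen_equations E src tgt len W \<phi> \<mu> d d2)"
  unfolding is_eigenfunction_def eigen_equations_def by blast

lemma eigen_equations_edge_ode: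
  assumes "eigen_equations E src tgt len W \<phi> \<mu> d d2" "e \<in> E"
  shows "\<forall>x\<in>{0..len e}. (\<phi> e has_real_derivative d e x) (at x within {0..len e}) \<and>
      (d e has_real_derivative d2 e x) (at x within {0..len e}) \<and> d2 e x = (W e x - \<mu>) * \<phi> e x"
proof
  fix x assume "x \<in> {0..len e}"
  with assms have "(\<phi> e has_real_derivative d e x) (at x within {0..len e}) \<and>
      (d e has_real_derivative d2 e x) (at x within {0..len e}) \<and> - d2 e x + W e x * \<phi> e x = \<mu> * \<phi> e x"
    unfolding eigen_equations_def by blast
  then show "(\<phi> e has_real_derivative d e x) (at x within {0..len e}) \<and>
      (d e has_real_derivative d2 e x) (at x within {0..len e}) \<and> d2 e x = (W e x - \<mu>) * \<phi> e x"
    by (auto simp: left_diff_distrib)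
qed

lemma eigen_equations_ode_at:
  assumes "eigen_equations E src tgt len W \<phi> \<mu> d d2" "e \<in> E" "x \<in> {0<..<len e}"
  shows "(\<phi> e has_real_derivative d e x) (at x)" "(d e has_real_derivative d2 e x) (at x)"
    and "d2 e x = (W e x - \<mu>) * \<phi> e x"
proof -
  have "x \<in> {0..len e}" and at_x: "at x within {0..len e} = at x"
    using assms(3) by (auto intro: at_within_interior)
  then have "(\<phi> e has_real_derivative d e x) (at x within {0..len e})"
    and "(d e has_real_derivative d2 e x) (at x within {0..len e})"
    and "d2 e x = (W e x - \<mu>) * \<phi> e x"
    using eigen_equations_edge_ode[OF assms(1,2)] by blast+
  then show "(\<phi> e has_real_derivative d e x) (at x)" "(d e has_real_derivative d2 e x) (at x)"
    and "d2 e x = (W e x - \<mu>) * \<phi> e x"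
    by (simp_all only: at_x)
qed

lemma eigen_equations_continuous_on:
  assumes "eigen_equations E src tgt len W \<phi> \<mu> d d2" "e \<in> E"
  shows "continuous_on {0..len e} (\<phi> e)"
  using eigen_equations_edge_ode[OF assms] by (blast intro: DERIV_continuous_on)

lemma eigen_equations_sum:
  fixes c :: "'i \<Rightarrow> real"
  assumes eq: "\<forall>i\<in>S. eigen_equations E src tgt len W (\<phi> i) \<mu> (d i) (d2 i)"
  shows "eigen_equations E src tgt len W (\<lambda>e x. \<Sum>i\<in>S. c i * \<phi> i e x) \<mu>
      (\<lambda>e x. \<Sum>i\<in>S. c i * d i e x) (\<lambda>e x. \<Sum>i\<in>S. c i * d2 i e x)"
  unfolding eigen_equations_def
proof (intro conjI ballI impI)
  fix e x assume "e \<in> E" "x \<in> {0..len e}"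
  then have ode: "(\<phi> i e has_real_derivative d i e x) (at x within {0..len e})"
    "(d i e has_real_derivative d2 i e x) (at x within {0..len e})"
    "- d2 i e x + W e x * \<phi> i e x = \<mu> * \<phi> i e x" if "i \<in> S" for i
    using eq that unfolding eigen_equations_def by blast+
  show "((\<lambda>x. \<Sum>i\<in>S. c i * \<phi> i e x) has_real_derivative (\<Sum>i\<in>S. c i * d i e x))
      (at x within {0..len e})"
    and "((\<lambda>x. \<Sum>i\<in>S. c i * d i e x) has_real_derivative (\<Sum>i\<in>S. c i * d2 i e x))
      (at x within {0..len e})"
    by (intro DERIV_sum DERIV_cmult ode; assumption)+
  have "(\<Sum>i\<in>S. c i * d2 i e x) = (\<Sum>i\<in>S. W e x * (c i * \<phi> i e x) - \<mu> * (c i * \<phi> i e x))"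
  proof (rule sum.cong)
    fix i assume "i \<in> S"
    from ode(3)[OF this] show "c i * d2 i e x = W e x * (c i * \<phi> i e x) - \<mu> * (c i * \<phi> i e x)"
      by (simp add: algebra_simps)
  qed simp
  then show "- (\<Sum>i\<in>S. c i * d2 i e x) + W e x * (\<Sum>i\<in>S. c i * \<phi> i e x) =
      \<mu> * (\<Sum>i\<in>S. c i * \<phi> i e x)"
    by (simp add: sum_subtractf sum_distrib_left)
next
  fix v e assume "v \<in> graph_vertices E src tgt" "vdegree E src tgt v = 1" "e \<in> E"
  with eq have "\<forall>i\<in>S. (src e = v \<longrightarrow> \<phi> i e 0 = 0) \<and> (tgt e = v \<longrightarrow> \<phi> i e (len e) = 0)"
    unfolding eigen_equations_def by blast
  then show "src e = v \<Longrightarrow> (\<Sum>i\<in>S. c i * \<phi> i e 0) = 0"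
    and "tgt e = v \<Longrightarrow> (\<Sum>i\<in>S. c i * \<phi> i e (len e)) = 0"
    by simp_all
next
  fix v assume v: "v \<in> graph_vertices E src tgt" "2 \<le> vdegree E src tgt v"
  with eq have "\<forall>i\<in>S. \<exists>val. \<forall>e\<in>E. (src e = v \<longrightarrow> \<phi> i e 0 = val) \<and> (tgt e = v \<longrightarrow> \<phi> i e (len e) = val)"
    unfolding eigen_equations_def by blast
  then obtain val where
    "\<forall>i\<in>S. \<forall>e\<in>E. (src e = v \<longrightarrow> \<phi> i e 0 = val i) \<and> (tgt e = v \<longrightarrow> \<phi> i e (len e) = val i)"
    by (metis bchoice)
  then show "\<exists>val. \<forall>e\<in>E. (src e = v \<longrightarrow> (\<Sum>i\<in>S. c i * \<phi> i e 0) = val) \<and>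
      (tgt e = v \<longrightarrow> (\<Sum>i\<in>S. c i * \<phi> i e (len e)) = val)"
    by (intro exI[of _ "\<Sum>i\<in>S. c i * val i"]) simp
  have swap: "(\<Sum>e\<in>A. \<Sum>i\<in>S. c i * h i e) = (\<Sum>i\<in>S. c i * (\<Sum>e\<in>A. h i e))"
    for A and h :: "'i \<Rightarrow> 'e \<Rightarrow> real"
    by (subst sum.swap) (simp add: sum_distrib_left)
  have "(\<Sum>e\<in>{e\<in>E. src e = v}. \<Sum>i\<in>S. c i * d i e 0) +
      (\<Sum>e\<in>{e\<in>E. tgt e = v}. - (\<Sum>i\<in>S. c i * d i e (len e))) =
      (\<Sum>i\<in>S. c i * ((\<Sum>e\<in>{e\<in>E. src e = v}. d i e 0) + (\<Sum>e\<in>{e\<in>E. tgt e = v}. - d i e (len e))))"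
    by (simp add: swap sum_negf right_diff_distrib sum_subtractf)
  also have "\<dots> = 0"
    using eq v unfolding eigen_equations_def by simp
  finally show "(\<Sum>e\<in>{e\<in>E. src e = v}. \<Sum>i\<in>S. c i * d i e 0) +
      (\<Sum>e\<in>{e\<in>E. tgt e = v}. - (\<Sum>i\<in>S. c i * d i e (len e))) = 0" .
qed

lemma eigen_system_eigen_equations:
  assumes "eigen_system E src tgt len W lam f"
  obtains d d2 where "\<And>j. eigen_equations E src tgt len W (f j) (lam j) (d j) (d2 j)"
proof -
  have "\<forall>j. \<exists>d d2. eigen_equations E src tgt len W (f j) (lam j) d d2"
    using assms by (simp add: eigen_system_def is_eigenfunction_iff)
  then show ?thesis
    using that by metis
qed

lemma l2_inner_sum_left:
  fixes c :: "'i \<Rightarrow> real"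
  assumes "finite S"
    and "\<forall>i\<in>S. \<forall>e\<in>E. continuous_on {0..len e} (\<phi> i e)" "\<forall>e\<in>E. continuous_on {0..len e} (\<psi> e)"
  shows "l2_inner E len (\<lambda>e x. \<Sum>i\<in>S. c i * \<phi> i e x) \<psi> = (\<Sum>i\<in>S. c i * l2_inner E len (\<phi> i) \<psi>)"
proof -
  have "integral {0..len e} (\<lambda>x. (\<Sum>i\<in>S. c i * \<phi> i e x) * \<psi> e x) =
      (\<Sum>i\<in>S. c i * integral {0..len e} (\<lambda>x. \<phi> i e x * \<psi> e x))" if "e \<in> E" for e
  proof -
    have "(\<lambda>x. c i * (\<phi> i e x * \<psi> e x)) integrable_on {0..len e}" if "i \<in> S" for i
      using assms \<open>e \<in> E\<close> that by (intro integrable_continuous_interval continuous_intros) auto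
    then have "integral {0..len e} (\<lambda>x. \<Sum>i\<in>S. c i * (\<phi> i e x * \<psi> e x)) =
        (\<Sum>i\<in>S. integral {0..len e} (\<lambda>x. c i * (\<phi> i e x * \<psi> e x)))"
      by (rule integral_sum[OF \<open>finite S\<close>])
    then show ?thesis
      by (simp add: sum_distrib_right mult.assoc)
  qed
  then show ?thesis
    unfolding l2_inner_def by (simp add: sum_distrib_left flip: sum.swap[of _ S])
qed

lemma l2_inner_self_pos:
  assumes "finite E" "\<forall>e\<in>E. 0 < len e" "\<forall>e\<in>E. continuous_on {0..len e} (\<phi> e)"
    and "e \<in> E" "x \<in> {0..len e}" "\<phi> e x \<noteq> 0"
  shows "0 < l2_inner E len \<phi> \<phi>"
  unfolding l2_inner_def
proof (rule sum_pos2[OF \<open>finite E\<close> \<open>e \<in> E\<close>])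
  have square_cont: "continuous_on {0..len e'} (\<lambda>x. \<phi> e' x * \<phi> e' x)" if "e' \<in> E" for e'
    using assms(3) that by (intro continuous_intros) auto
  then show "0 \<le> integral {0..len e'} (\<lambda>x. \<phi> e' x * \<phi> e' x)" if "e' \<in> E" for e'
    using that by (intro integral_nonneg integrable_continuous_interval) auto
  moreover have "integral {0..len e} (\<lambda>x. \<phi> e x * \<phi> e x) \<noteq> 0"
    using integral_eq_0_iff[OF square_cont] assms by auto
  ultimately show "0 < integral {0..len e} (\<lambda>x. \<phi> e x * \<phi> e x)"
    using \<open>e \<in> E\<close> by (simp add: order_less_le)
qed

lemma eigen_system_lincomb_zero:
  assumes mg: "metric_graph E src tgt len" and es: "eigen_system E src tgt len W lam f"
    and "finite S" "inj_on k S"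
    and zero: "\<forall>e\<in>E. \<forall>x\<in>{0..len e}. (\<Sum>i\<in>S. c i * f (k i) e x) = 0"
    and "j \<in> S"
  shows "c j = 0"
proof -
  obtain d d2 where eq: "\<And>j. eigen_equations E src tgt len W (f j) (lam j) (d j) (d2 j)"
    using eigen_system_eigen_equations[OF es] by blast
  have cont: "\<forall>e\<in>E. continuous_on {0..len e} (f j e)" for j
    using eigen_equations_continuous_on[OF eq] by blast
  have "\<forall>i j. i \<noteq> j \<longrightarrow> l2_inner E len (f i) (f j) = 0"
    using es by (simp add: eigen_system_def)
  then have orth: "l2_inner E len (f (k i)) (f (k j)) = 0" if "i \<in> S" "i \<noteq> j" for i
    using inj_onD[OF \<open>inj_on k S\<close> _ that(1) \<open>j \<in> S\<close>] that by blast
  have "integral {0..len e} (\<lambda>x. (\<Sum>i\<in>S. c i * f (k i) e x) * f (k j) e x) = 0" if "e \<in> E" for e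
  proof -
    have "integral {0..len e} (\<lambda>x. (\<Sum>i\<in>S. c i * f (k i) e x) * f (k j) e x) =
        integral {0..len e} (\<lambda>_. 0)"
      by (rule integral_cong) (use zero that in auto)
    then show ?thesis
      by simp
  qed
  then have "0 = l2_inner E len (\<lambda>e x. \<Sum>i\<in>S. c i * f (k i) e x) (f (k j))"
    by (simp add: l2_inner_def)
  also have "\<dots> = (\<Sum>i\<in>S. c i * l2_inner E len (f (k i)) (f (k j)))"
    using cont by (intro l2_inner_sum_left \<open>finite S\<close>) auto
  also have "\<dots> = c j * l2_inner E len (f (k j)) (f (k j))"
    using orth \<open>finite S\<close> \<open>j \<in> S\<close> by (simp add: sum.remove)
  finally have "c j * l2_inner E len (f (k j)) (f (k j)) = 0" ..
  have "\<exists>e\<in>E. \<exists>x\<in>{0..len e}. f (k j) e x \<noteq> 0"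
    using es by (simp add: eigen_system_def is_eigenfunction_def)
  moreover have "finite E" "\<forall>e\<in>E. 0 < len e"
    using mg by (simp_all add: metric_graph_def)
  ultimately have "0 < l2_inner E len (f (k j)) (f (k j))"
    using l2_inner_self_pos[OF _ _ cont] by blast
  with \<open>c j * l2_inner E len (f (k j)) (f (k j)) = 0\<close> show ?thesis
    by simp
qed

lemma vdegree_less_2_incident_unique:
  assumes "finite E" "e0 \<in> E" "e \<in> E" "src e0 = v \<or> tgt e0 = v" "src e = v \<or> tgt e = v"
    and "vdegree E src tgt v < 2"
  shows "e = e0"
proof (rule ccontr)
  assume "e \<noteq> e0"
  let ?A = "{e\<in>E. src e = v}" and ?B = "{e\<in>E. tgt e = v}"
  have "2 = card {e, e0}"
    using \<open>e \<noteq> e0\<close> by simp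
  also have "\<dots> \<le> card (?A \<union> ?B)"
    using assms by (intro card_mono) auto
  also have "\<dots> \<le> vdegree E src tgt v"
    unfolding vdegree_def by (rule card_Un_le)
  finally show False
    using assms(6) by simp
qed

lemma metric_graph_single_edge:
  assumes mg: "metric_graph E src tgt len" and e0: "e0 \<in> E"
    and "vdegree E src tgt (src e0) < 2" "vdegree E src tgt (tgt e0) < 2"
  shows "E = {e0}"
proof -
  have fin: "finite E"
    using mg by (simp add: metric_graph_def)
  have touching: "e = e0"
    if e: "e \<in> E" and touch: "src e \<in> {src e0, tgt e0} \<or> tgt e \<in> {src e0, tgt e0}" for e
  proof -
    consider "src e = src e0 \<or> tgt e = src e0" | "src e = tgt e0 \<or> tgt e = tgt e0"
      using touch by auto
    then show ?thesis
    proof cases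
      case 1
      with vdegree_less_2_incident_unique[OF fin e0 e _ _ assms(3)] show ?thesis by simp
    next
      case 2
      with vdegree_less_2_incident_unique[OF fin e0 e _ _ assms(4)] show ?thesis by simp
    qed
  qed
  define R where "R a b \<longleftrightarrow> (\<exists>e\<in>E. (src e = a \<and> tgt e = b) \<or> (src e = b \<and> tgt e = a))" for a b
  have reach: "u \<in> {src e0, tgt e0}" if "R\<^sup>*\<^sup>* (src e0) u" for u
    using that
  proof (induction rule: rtranclp_induct)
    case (step u w)
    then obtain e where "e \<in> E" "(src e = u \<and> tgt e = w) \<or> (src e = w \<and> tgt e = u)"
      unfolding R_def by blast
    with step.IH touching[of e] show ?case by auto
  qed simp
  have "e = e0" if "e \<in> E" for e
  proof -
    have "src e \<in> graph_vertices E src tgt" "src e0 \<in> graph_vertices E src tgt"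
      using that e0 by (auto simp: graph_vertices_def)
    with mg have "R\<^sup>*\<^sup>* (src e0) (src e)"
      unfolding metric_graph_def R_def by blast
    with reach touching that show ?thesis by blast
  qed
  with e0 show ?thesis by blast
qed

lemma graph_C1_continuous_on_edge:
  assumes "graph_C1 E src tgt len W" "e \<in> E"
  shows "continuous_on {0..len e} (W e)"
  using assms unfolding graph_C1_def by (blast intro: DERIV_continuous_on)

lemma graph_open_edge_interval:
  assumes "metric_graph E src tgt len" "graph_open E src tgt len U" "(e, x) \<in> U"
  obtains p q where "e \<in> E" "0 \<le> p" "p < q" "q \<le> len e" "\<forall>z\<in>{p<..<q}. (e, z) \<in> U"
proof -
  have "e \<in> E" "x \<in> {0..len e}" "0 < len e"
    using assms by (auto simp: graph_open_def graph_points_def metric_graph_def)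
  moreover have "openin (top_of_set {0..len e}) {z\<in>{0..len e}. (e, z) \<in> U}"
    using assms(2) \<open>e \<in> E\<close> by (simp add: graph_open_def)
  ultimately obtain p q where "0 \<le> p" "p < q" "q \<le> len e" "{p<..<q} \<subseteq> {z\<in>{0..len e}. (e, z) \<in> U}"
    using openin_Icc_contains_interval[of 0 "len e"] assms(3) by blast
  with \<open>e \<in> E\<close> show ?thesis
    using that by blast
qed

section \<open>Unique continuation on generic graphs\<close>

lemma generic_eigen_equations_vanishing_on_interval:
  assumes mg: "metric_graph E src tgt len" and C1: "graph_C1 E src tgt len W"
    and gen: "W_generic E src tgt len W" and eq: "eigen_equations E src tgt len W \<phi> \<mu> d d2"
    and e0: "e0 \<in> E" and "0 \<le> p" "p < q" "q \<le> len e0"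
    and zero: "\<And>x. x \<in> {p<..<q} \<Longrightarrow> \<phi> e0 x = 0"
  shows "\<forall>e\<in>E. \<forall>x\<in>{0..len e}. \<phi> e x = 0"
proof -
  define m where "m = (p + q) / 2"
  have m: "m \<in> {p<..<q}" "m \<in> {0<..<len e0}"
    using \<open>0 \<le> p\<close> \<open>p < q\<close> \<open>q \<le> len e0\<close> by (auto simp: m_def)
  have "d e0 m = 0"
    using DERIV_zero_if_vanishing_on_open[OF _ m(1) zero eigen_equations_ode_at(1)[OF eq e0 m(2)]]
    by simp
  have "continuous_on {0..len e0} (\<lambda>x. W e0 x - \<mu>)"
    using graph_C1_continuous_on_edge[OF C1 e0] by (intro continuous_intros)
  from linear_ode2_zero_initial_imp_zero[OF this eigen_equations_edge_ode[OF eq e0] _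
      zero[OF m(1)] \<open>d e0 m = 0\<close>]
  have edge_zero: "\<forall>x\<in>{0..len e0}. \<phi> e0 x = 0"
    using m(2) by simp
  show ?thesis
  proof (rule ccontr)
    assume "\<not> ?thesis"
    with eq have "is_eigenfunction E src tgt len W \<phi> \<mu>"
      unfolding is_eigenfunction_iff by blast
    \<comment> \<open>By genericity an eigenfunction cannot vanish at an inner vertex, so both ends of \<open>e0\<close> are leaves.\<close>
    moreover have "src e0 \<in> graph_vertices E src tgt" "tgt e0 \<in> graph_vertices E src tgt"
      using e0 by (auto simp: graph_vertices_def)
    moreover have "\<phi> e0 0 = 0" "\<phi> e0 (len e0) = 0"
      using edge_zero \<open>0 \<le> p\<close> \<open>p < q\<close> \<open>q \<le> len e0\<close> by auto
    ultimately have "\<not> 2 \<le> vdegree E src tgt (src e0)" "\<not> 2 \<le> vdegree E src tgt (tgt e0)"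
      using gen e0 unfolding W_generic_def by blast+
    then have "E = {e0}"
      by (intro metric_graph_single_edge[OF mg e0]) auto
    with edge_zero \<open>\<not> ?thesis\<close> show False
      by simp
  qed
qed

lemma generic_eigen_sum_vanishing_on_interval:
  assumes mg: "metric_graph E src tgt len" and C1: "graph_C1 E src tgt len W"
    and gen: "W_generic E src tgt len W" and "finite \<Lambda>"
    and eq: "\<And>\<mu>. \<mu> \<in> \<Lambda> \<Longrightarrow> eigen_equations E src tgt len W (G \<mu>) \<mu> (D \<mu>) (D2 \<mu>)"
    and e0: "e0 \<in> E" and "0 \<le> p" "p < q" "q \<le> len e0"
    and zero: "\<And>x. x \<in> {p<..<q} \<Longrightarrow> (\<Sum>\<mu>\<in>\<Lambda>. G \<mu> e0 x) = 0"
    and "\<mu> \<in> \<Lambda>"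
  shows "\<forall>e\<in>E. \<forall>x\<in>{0..len e}. G \<mu> e x = 0"
proof (rule generic_eigen_equations_vanishing_on_interval[OF mg C1 gen eq[OF \<open>\<mu> \<in> \<Lambda>\<close>] e0
      \<open>0 \<le> p\<close> \<open>p < q\<close> \<open>q \<le> len e0\<close>])
  have interior: "x \<in> {0<..<len e0}" if "x \<in> {p<..<q}" for x
    using that \<open>0 \<le> p\<close> \<open>q \<le> len e0\<close> by auto
  show "G \<mu> e0 x = 0" if "x \<in> {p<..<q}" for x
    by (rule eigensolution_sum_zero_imp_zero[OF \<open>finite \<Lambda>\<close> inj_on_id[of \<Lambda>, unfolded id_def]
          open_greaterThanLessThan, where w = "W e0"])
       (use eigen_equations_ode_at[OF eq e0 interior] zero \<open>\<mu> \<in> \<Lambda>\<close> that in auto)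
qed

lemma generic_eigen_lincomb_vanishing_on_interval:
  assumes mg: "metric_graph E src tgt len" and C1: "graph_C1 E src tgt len W"
    and gen: "W_generic E src tgt len W" and es: "eigen_system E src tgt len W lam f"
    and "finite S" "inj_on k S"
    and e0: "e0 \<in> E" and pq: "0 \<le> p" "p < q" "q \<le> len e0"
    and zero: "\<And>x. x \<in> {p<..<q} \<Longrightarrow> (\<Sum>i\<in>S. b i * f (k i) e0 x) = 0"
    and "j \<in> S"
  shows "b j = 0"
proof -
  obtain d d2 where eq: "\<And>j. eigen_equations E src tgt len W (f j) (lam j) (d j) (d2 j)"
    using eigen_system_eigen_equations[OF es] by blast
  \<comment> \<open>Terms with equal eigenvalues are grouped: the separation argument needs distinct ones.\<close>
  define grp where "grp \<mu> = {i\<in>S. lam (k i) = \<mu>}" for \<mu>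
  define G where "G \<mu> e x = (\<Sum>i\<in>grp \<mu>. b i * f (k i) e x)" for \<mu> e x
  have eqG: "eigen_equations E src tgt len W (G \<mu>) \<mu>
      (\<lambda>e x. \<Sum>i\<in>grp \<mu>. b i * d (k i) e x) (\<lambda>e x. \<Sum>i\<in>grp \<mu>. b i * d2 (k i) e x)" for \<mu>
    unfolding G_def[abs_def] by (rule eigen_equations_sum) (auto simp: grp_def eq[of "k _", simplified])
  have G_zero: "\<forall>e\<in>E. \<forall>x\<in>{0..len e}. G (lam (k j)) e x = 0"
  proof (rule generic_eigen_sum_vanishing_on_interval[OF mg C1 gen _ eqG e0 pq])
    show "finite ((\<lambda>i. lam (k i)) ` S)" "lam (k j) \<in> (\<lambda>i. lam (k i)) ` S"
      using \<open>finite S\<close> \<open>j \<in> S\<close> by auto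
    have "(\<Sum>\<mu>\<in>(\<lambda>i. lam (k i)) ` S. G \<mu> e x) = (\<Sum>i\<in>S. b i * f (k i) e x)" for e x
      unfolding G_def grp_def by (rule sum.group) (use \<open>finite S\<close> in auto)
    with zero show "(\<Sum>\<mu>\<in>(\<lambda>i. lam (k i)) ` S. G \<mu> e0 x) = 0" if "x \<in> {p<..<q}" for x
      using that by simp
  qed
  show "b j = 0"
  proof (rule eigen_system_lincomb_zero[OF mg es _ _ G_zero[unfolded G_def]])
    show "finite (grp (lam (k j)))" "j \<in> grp (lam (k j))"
      using \<open>finite S\<close> \<open>j \<in> S\<close> by (simp_all add: grp_def)
    show "inj_on k (grp (lam (k j)))"
      using \<open>inj_on k S\<close> by (rule inj_on_subset) (auto simp: grp_def)
  qed
qed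

theorem lemma4:
  fixes E :: "'e set" and src tgt :: "'e \<Rightarrow> 'v" and len :: "'e \<Rightarrow> real"
    and W :: "'e \<Rightarrow> real \<Rightarrow> real"
    and lam :: "nat \<Rightarrow> real" and f :: "nat \<Rightarrow> 'e \<Rightarrow> real \<Rightarrow> real"
    and M :: nat and k :: "nat \<Rightarrow> nat" and a :: "nat \<Rightarrow> real"
    and y :: real and U :: "('e \<times> real) set"
  assumes "metric_graph E src tgt len"
    and "graph_C1 E src tgt len W"
    and "W_generic E src tgt len W"
    and "eigen_system E src tgt len W lam f"
    and "0 < M"
    and "strict_mono_on {..<M} k"
    and "\<forall>i<M. a i \<noteq> 0"
    and "graph_open E src tgt len U" and "U \<noteq> {}"
  shows "\<exists>(e, x)\<in>U. (\<Sum>i<M. a i * exp (- lam (k i) * y) * f (k i) e x) \<noteq> 0"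
proof (rule ccontr)
  assume "\<not> ?thesis"
  then have zero: "\<forall>(e, x)\<in>U. (\<Sum>i<M. a i * exp (- lam (k i) * y) * f (k i) e x) = 0"
    by auto
  obtain e0 x0 where "(e0, x0) \<in> U"
    using \<open>U \<noteq> {}\<close> by auto
  then obtain p q where e0: "e0 \<in> E" and pq: "0 \<le> p" "p < q" "q \<le> len e0"
    and in_U: "\<forall>z\<in>{p<..<q}. (e0, z) \<in> U"
    using graph_open_edge_interval[OF assms(1,8)] by metis
  have "a 0 * exp (- lam (k 0) * y) = 0"
  proof (rule generic_eigen_lincomb_vanishing_on_interval[where S = "{..<M}" and j = 0
        and b = "\<lambda>i. a i * exp (- lam (k i) * y)", OF assms(1-4) _ _ e0 pq])
    show "finite {..<M}" "0 \<in> {..<M}"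
      using \<open>0 < M\<close> by auto
    show "inj_on k {..<M}"
      using assms(6) by (rule strict_mono_on_imp_inj_on)
    show "(\<Sum>i<M. a i * exp (- lam (k i) * y) * f (k i) e0 x) = 0" if "x \<in> {p<..<q}" for x
      using zero in_U that by auto
  qed
  with assms(7) \<open>0 < M\<close> show False
    by simp
qed

end
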